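(* Let $k,l$ be positive integers, let $G$ be a $k$-degenerate graph and $H$ an $l$-degenerate graph. Then $G+_R H$ is $(k+l)$-degenerate.
   Context: A graph is $k$-degenerate if its vertices can be successively deleted so that each deleted vertex has degree at most $k$ at the time of deletion. The triangle parallel graph $R(G)$ has vertex set $V(G)\cup E(G)$: it consists of $G$ together with, for each edge $e=xy$ of $G$, a new vertex $e$ adjacent to $x$ and $y$. The $R$-sum $G+_R H$ has vertex set $(V(G)\cup E(G))\times V(H)$, and $(u_1,u_2)\sim(v_1,v_2)$ iff [$u_1=v_1\in V(G)$ and $u_2v_2\in E(H)$] or [$u_2=v_2$ and $u_1v_1\in E(R(G))$]. *)

theory Defs
  imports Main
begin

type_synonym 'a ugraph = "'a set \<times> 'a set set"

definition verts :: "'a ugraph \<Rightarrow> 'a set" where "verts G = fst G"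
definition edges :: "'a ugraph \<Rightarrow> 'a set set" where "edges G = snd G"

definition simple_graph :: "'a ugraph \<Rightarrow> bool" where
  "simple_graph G \<longleftrightarrow> finite (verts G) \<and>
     (\<forall>e\<in>edges G. \<exists>x y. x \<noteq> y \<and> x \<in> verts G \<and> y \<in> verts G \<and> e = {x, y})"

text \<open>k-degenerate: the vertices can be deleted one after another (in the order of
  the list vs) so that each deleted vertex has degree at most k in the graph that
  remains at the time of deletion, i.e. at most k neighbours among the vertices
  deleted after it.\<close>

definition degenerate :: "nat \<Rightarrow> 'a ugraph \<Rightarrow> bool" where
  "degenerate k G \<longleftrightarrow> (\<exists>vs. distinct vs \<and> set vs = verts G \<and>
     (\<forall>i < length vs. card {j. i < j \<and> j < length vs \<and> {vs ! i, vs ! j} \<in> edges G} \<le> k))"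

text \<open>Triangle parallel graph R(G): vertex set V(G) \<union> E(G) (as a disjoint sum),
  G together with, for each edge e = xy, a new vertex e adjacent to x and y.\<close>

definition tri_parallel :: "'a ugraph \<Rightarrow> ('a + 'a set) ugraph" where
  "tri_parallel G =
     (Inl ` verts G \<union> Inr ` edges G,
      {{Inl x, Inl y} | x y. {x, y} \<in> edges G} \<union>
      {{Inr e, Inl x} | e x. e \<in> edges G \<and> x \<in> e})"

definition R_sum :: "'a ugraph \<Rightarrow> 'b ugraph \<Rightarrow> (('a + 'a set) \<times> 'b) ugraph" where
  "R_sum G H =
     (verts (tri_parallel G) \<times> verts H,
      {{(u1, u2), (v1, v2)} | u1 u2 v1 v2.
         (u1, u2) \<in> verts (tri_parallel G) \<times> verts H \<and>
         (v1, v2) \<in> verts (tri_parallel G) \<times> verts H \<and>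
         ((u1 = v1 \<and> u1 \<in> Inl ` verts G \<and> {u2, v2} \<in> edges H) \<or>
          (u2 = v2 \<and> {u1, v1} \<in> edges (tri_parallel G)))})"

end

(*
  A graph is k-degenerate iff its vertices can be ranked so that every vertex has at most k
  neighbours of higher rank; ties are harmless as long as neighbours of equal rank are counted
  too. Rank G +_R H by putting all edge vertices (e, w) first, with equal rank, followed by the
  vertices (x, w) ordered lexicographically by the rank of x in G and of w in H. An edge vertex
  (e, w) is adjacent only to the two copies of the endpoints of e in layer w, so it has at most
  2 <= k + l neighbours of rank at least its own. Above (x, w) lie only neighbours (x, w') with
  w' above w in H, at most l of them, and neighbours (y, w) with y above x in G, at most k.
*)

theory Submission
  imports Defs "HOL-Library.Product_Lexorder"
begin

definition nbrs :: "'a ugraph \<Rightarrow> 'a \<Rightarrow> 'a set" where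
  "nbrs G v = {u \<in> verts G. {v, u} \<in> edges G}"

lemma degenerate_rankE:
  assumes "degenerate k G"
  obtains r :: "'a \<Rightarrow> nat"
  where "inj_on r (verts G)"
    and "\<And>v. v \<in> verts G \<Longrightarrow> card {u \<in> nbrs G v. r v < r u} \<le> k"
proof -
  obtain vs where dist: "distinct vs" and set_vs: "set vs = verts G"
    and later: "\<And>i. i < length vs \<Longrightarrow>
      card {j. i < j \<and> j < length vs \<and> {vs ! i, vs ! j} \<in> edges G} \<le> k"
    using assms unfolding degenerate_def by blast
  define r where "r = inv_into {..<length vs} (nth vs)"
  have img: "nth vs ` {..<length vs} = verts G"
    using set_vs by (auto simp: set_conv_nth)
  have r: "r v < length vs" "vs ! r v = v" if "v \<in> verts G" for v
  proof -
    have "v \<in> nth vs ` {..<length vs}"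
      using that img by simp
    then have "r v \<in> {..<length vs}" "vs ! r v = v"
      unfolding r_def by (rule inv_into_into, rule f_inv_into_f)
    then show "r v < length vs" "vs ! r v = v"
      by auto
  qed
  have "inj_on r (verts G)"
    by (metis inj_onI r(2))
  moreover have "card {u \<in> nbrs G v. r v < r u} \<le> k" if v: "v \<in> verts G" for v
  proof -
    let ?J = "{j. r v < j \<and> j < length vs \<and> {vs ! r v, vs ! j} \<in> edges G}"
    have "{u \<in> nbrs G v. r v < r u} \<subseteq> nth vs ` ?J"
      using r v by (force simp: nbrs_def)
    then have "card {u \<in> nbrs G v. r v < r u} \<le> card (nth vs ` ?J)"
      by (rule card_mono[rotated]) auto
    also have "\<dots> \<le> card ?J"
      by (rule card_image_le) auto
    also have "\<dots> \<le> k"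
      using later r(1)[OF v] .
    finally show ?thesis .
  qed
  ultimately show ?thesis using that by blast
qed

lemma degenerate_if_rank:
  fixes r :: "'a \<Rightarrow> 'c::linorder"
  assumes "finite (verts G)" and inj: "inj_on r (verts G)"
    and later: "\<And>v. v \<in> verts G \<Longrightarrow> card {u \<in> nbrs G v. r v < r u} \<le> k"
  shows "degenerate k G"
proof -
  obtain xs where "distinct xs" "set xs = verts G"
    using assms(1) finite_distinct_list by blast
  define vs where "vs = sort_key r xs"
  have set_vs: "set vs = verts G" and dist: "distinct vs" and "sorted (map r vs)"
    unfolding vs_def using \<open>distinct xs\<close> \<open>set xs = verts G\<close> by auto
  then have strict: "sorted_wrt (<) (map r vs)"
    using inj by (simp add: strict_sorted_iff distinct_map)
  have "card {j. i < j \<and> j < length vs \<and> {vs ! i, vs ! j} \<in> edges G} \<le> k"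
    if i: "i < length vs" for i
  proof -
    let ?J = "{j. i < j \<and> j < length vs \<and> {vs ! i, vs ! j} \<in> edges G}"
    have "inj_on (nth vs) ?J"
      using dist by (intro inj_on_nth) auto
    then have "card ?J = card (nth vs ` ?J)"
      by (simp add: card_image)
    also have "nth vs ` ?J \<subseteq> {u \<in> nbrs G (vs ! i). r (vs ! i) < r u}"
      using sorted_wrt_nth_less[OF strict] set_vs by (auto simp: nbrs_def)
    then have "card (nth vs ` ?J) \<le> card {u \<in> nbrs G (vs ! i). r (vs ! i) < r u}"
      using assms(1) by (intro card_mono) (auto simp: nbrs_def)
    also have "\<dots> \<le> k"
      using later i nth_mem set_vs by blast
    finally show ?thesis .
  qed
  then show ?thesis
    unfolding degenerate_def using dist set_vs by blast
qed

lemma degenerate_if_weak_rank: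
  fixes r :: "'a \<Rightarrow> 'c::linorder"
  assumes fin: "finite (verts G)"
    and later: "\<And>v. v \<in> verts G \<Longrightarrow> card {u \<in> nbrs G v. u \<noteq> v \<and> r v \<le> r u} \<le> k"
  shows "degenerate k G"
proof -
  obtain g :: "'a \<Rightarrow> nat" where g: "inj_on g (verts G)"
    using fin finite_imp_inj_to_nat_seg by blast
  show ?thesis
  proof (rule degenerate_if_rank[where r = "\<lambda>v. (r v, g v)"])
    show "inj_on (\<lambda>v. (r v, g v)) (verts G)"
      using g by (auto intro: inj_onI dest: inj_onD)
    fix v assume v: "v \<in> verts G"
    have "{u \<in> nbrs G v. (r v, g v) < (r u, g u)} \<subseteq> {u \<in> nbrs G v. u \<noteq> v \<and> r v \<le> r u}"
      by auto
    then have "card {u \<in> nbrs G v. (r v, g v) < (r u, g u)}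
        \<le> card {u \<in> nbrs G v. u \<noteq> v \<and> r v \<le> r u}"
      using fin by (intro card_mono) (auto simp: nbrs_def)
    also have "\<dots> \<le> k"
      using later v .
    finally show "card {u \<in> nbrs G v. (r v, g v) < (r u, g u)} \<le> k" .
  qed (fact fin)
qed

lemma simple_graph_finite_edges:
  assumes "simple_graph G"
  shows "finite (edges G)"
proof -
  have "edges G \<subseteq> Pow (verts G)"
    using assms by (force simp: simple_graph_def)
  then show ?thesis
    using assms by (auto simp: simple_graph_def intro: finite_subset)
qed

lemma simple_graph_card_edge:
  assumes "simple_graph G" "e \<in> edges G"
  shows "card e = 2"
  using assms by (auto simp: simple_graph_def)

lemma verts_R_sum:
  "verts (R_sum G H) = (Inl ` verts G \<union> Inr ` edges G) \<times> verts H"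
  by (simp add: R_sum_def tri_parallel_def verts_def)

lemma tri_parallel_edge_iff:
  "{a, b} \<in> edges (tri_parallel G) \<longleftrightarrow>
     (\<exists>x y. a = Inl x \<and> b = Inl y \<and> {x, y} \<in> edges G) \<or>
     (\<exists>e x. a = Inr e \<and> b = Inl x \<and> e \<in> edges G \<and> x \<in> e) \<or>
     (\<exists>e x. a = Inl x \<and> b = Inr e \<and> e \<in> edges G \<and> x \<in> e)"
  unfolding tri_parallel_def edges_def
  by (auto simp: doubleton_eq_iff insert_commute)

lemma R_sum_edge_iff:
  "{p, q} \<in> edges (R_sum G H) \<longleftrightarrow>
    p \<in> verts (R_sum G H) \<and> q \<in> verts (R_sum G H) \<and>
    ((fst p = fst q \<and> fst p \<in> Inl ` verts G \<and> {snd p, snd q} \<in> edges H) \<or>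
     (snd p = snd q \<and> {fst p, fst q} \<in> edges (tri_parallel G)))"
  unfolding R_sum_def edges_def verts_def
  by (auto simp: doubleton_eq_iff insert_commute) blast+

lemma nbrs_R_sum_Inl:
  assumes "x \<in> verts G" "w \<in> verts H"
  shows "nbrs (R_sum G H) (Inl x, w) =
    Pair (Inl x) ` nbrs H w \<union> (\<lambda>y. (Inl y, w)) ` nbrs G x \<union>
    (\<lambda>e. (Inr e, w)) ` {e \<in> edges G. x \<in> e}"
  using assms
  by (auto simp: nbrs_def R_sum_edge_iff tri_parallel_edge_iff verts_R_sum)

lemma nbrs_R_sum_Inr:
  assumes "e \<in> edges G" "w \<in> verts H"
  shows "nbrs (R_sum G H) (Inr e, w) = (\<lambda>x. (Inl x, w)) ` (e \<inter> verts G)"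
  using assms
  by (auto simp: nbrs_def R_sum_edge_iff tri_parallel_edge_iff verts_R_sum)

definition R_sum_rank ::
    "('a \<Rightarrow> nat) \<Rightarrow> ('b \<Rightarrow> nat) \<Rightarrow> ('a + 'a set) \<times> 'b \<Rightarrow> nat \<times> nat" where
  "R_sum_rank rG rH p =
     (case p of (Inl x, w) \<Rightarrow> (Suc (rG x), rH w) | (Inr _, _) \<Rightarrow> (0, 0))"

lemma card_later_nbrs_R_sum_Inl:
  fixes G :: "'a ugraph" and H :: "'b ugraph"
  assumes "finite (verts G)" "finite (verts H)"
    and injG: "inj_on rG (verts G)" and injH: "inj_on rH (verts H)"
    and "x \<in> verts G" "w \<in> verts H"
  shows "card {u \<in> nbrs (R_sum G H) (Inl x, w).
            u \<noteq> (Inl x, w) \<and> R_sum_rank rG rH (Inl x, w) \<le> R_sum_rank rG rH u}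
    \<le> card {w' \<in> nbrs H w. rH w < rH w'} + card {y \<in> nbrs G x. rG x < rG y}"
  (is "card ?S \<le> _")
proof -
  let ?A = "Pair (Inl x :: 'a + 'a set) ` {w' \<in> nbrs H w. rH w < rH w'}"
  let ?B = "(\<lambda>y. (Inl y :: 'a + 'a set, w)) ` {y \<in> nbrs G x. rG x < rG y}"
  have sub: "?S \<subseteq> ?A \<union> ?B"
  proof (intro subsetI, elim CollectE conjE)
    fix u assume u: "u \<in> nbrs (R_sum G H) (Inl x, w)" and ne: "u \<noteq> (Inl x, w)"
      and le: "R_sum_rank rG rH (Inl x, w) \<le> R_sum_rank rG rH u"
    from u consider w' where "u = (Inl x, w')" "w' \<in> nbrs H w"
      | y where "u = (Inl y, w)" "y \<in> nbrs G x"
      | e where "u = (Inr e, w)"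
      using assms(5,6) by (auto simp: nbrs_R_sum_Inl)
    then show "u \<in> ?A \<union> ?B"
    proof cases
      case (1 w')
      then have "rH w < rH w'"
        using ne le inj_onD[OF injH, of w w'] assms(6)
        by (auto simp: R_sum_rank_def nbrs_def less_le)
      then show ?thesis using 1 by blast
    next
      case (2 y)
      then have "rG x < rG y"
        using ne le inj_onD[OF injG, of x y] assms(5)
        by (auto simp: R_sum_rank_def nbrs_def less_le)
      then show ?thesis using 2 by blast
    next
      case 3
      then show ?thesis using le by (simp add: R_sum_rank_def)
    qed
  qed
  have "card ?S \<le> card (?A \<union> ?B)"
    by (rule card_mono[OF _ sub]) (use assms(1,2) in \<open>auto simp: nbrs_def\<close>)
  also have "\<dots> \<le> card ?A + card ?B"
    by (rule card_Un_le)
  also have "\<dots> \<le> card {w' \<in> nbrs H w. rH w < rH w'} + card {y \<in> nbrs G x. rG x < rG y}"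
    by (intro add_mono card_image_le) (use assms(1,2) in \<open>auto simp: nbrs_def\<close>)
  finally show ?thesis .
qed

lemma card_nbrs_R_sum_Inr:
  assumes "simple_graph G" "e \<in> edges G" "w \<in> verts H"
  shows "card (nbrs (R_sum G H) (Inr e, w)) \<le> 2"
proof -
  have "card (nbrs (R_sum G H) (Inr e, w)) \<le> card (e \<inter> verts G)"
    unfolding nbrs_R_sum_Inr[OF assms(2,3)]
    by (rule card_image_le) (use assms in \<open>auto simp: simple_graph_def\<close>)
  also have "\<dots> \<le> card e"
    using assms by (intro card_mono) (auto simp: simple_graph_def)
  finally show ?thesis
    using simple_graph_card_edge[OF assms(1,2)] by simp
qed

theorem theorem2:
  fixes k l :: nat and G :: "'a ugraph" and H :: "'b ugraph"
  assumes "0 < k" and "0 < l"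
    and "simple_graph G" and "simple_graph H"
    and "degenerate k G" and "degenerate l H"
  shows "degenerate (k + l) (R_sum G H)"
proof -
  obtain rG :: "'a \<Rightarrow> nat" where injG: "inj_on rG (verts G)"
    and rG: "\<And>x. x \<in> verts G \<Longrightarrow> card {y \<in> nbrs G x. rG x < rG y} \<le> k"
    using degenerate_rankE[OF \<open>degenerate k G\<close>] by blast
  obtain rH :: "'b \<Rightarrow> nat" where injH: "inj_on rH (verts H)"
    and rH: "\<And>w. w \<in> verts H \<Longrightarrow> card {w' \<in> nbrs H w. rH w < rH w'} \<le> l"
    using degenerate_rankE[OF \<open>degenerate l H\<close>] by blast
  have fin: "finite (verts G)" "finite (verts H)" "finite (edges G)"
    using assms(3,4) simple_graph_finite_edges[OF assms(3)]
    by (auto simp: simple_graph_def)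
  show ?thesis
  proof (rule degenerate_if_weak_rank[where r = "R_sum_rank rG rH"])
    show "finite (verts (R_sum G H))"
      using fin by (simp add: verts_R_sum)
  next
    fix v assume "v \<in> verts (R_sum G H)"
    then consider x w where "v = (Inl x, w)" "x \<in> verts G" "w \<in> verts H"
      | e w where "v = (Inr e, w)" "e \<in> edges G" "w \<in> verts H"
      by (auto simp: verts_R_sum)
    then show "card {u \<in> nbrs (R_sum G H) v.
        u \<noteq> v \<and> R_sum_rank rG rH v \<le> R_sum_rank rG rH u} \<le> k + l"
    proof cases
      case (1 x w)
      then show ?thesis
        using card_later_nbrs_R_sum_Inl[OF fin(1,2) injG injH, of x w] rG[of x] rH[of w] by simp
    next
      case (2 e w)
      have "card {u \<in> nbrs (R_sum G H) v.
            u \<noteq> v \<and> R_sum_rank rG rH v \<le> R_sum_rank rG rH u} \<le> card (nbrs (R_sum G H) v)"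
        using fin by (intro card_mono) (auto simp: nbrs_def verts_R_sum)
      also have "\<dots> \<le> 2"
        using card_nbrs_R_sum_Inr[OF assms(3) 2(2,3)] 2(1) by simp
      finally show ?thesis
        using assms(1,2) by simp
    qed
  qed
qed

end
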